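(* Let $G$ be a group, $\phi\in\mathrm{Aut}(G)$, $K\subseteq G\rtimes_\phi\mathbb{Z}$ and $t^rg\in G\rtimes_\phi\mathbb{Z}$ (with $r\in\mathbb{Z}$, $g\in G$). For $m\in\mathbb{Z}$ put $K_m=\{x\in G\mid t^mx\in K\}$. (i) If $r=0$, then $g$ is conjugate in $G\rtimes_\phi\mathbb{Z}$ to an element of $K$ if and only if there exists $k\in\mathbb{Z}$ such that $\phi^k(g)$ is conjugate in $G$ to an element of $K_0$. (ii) If $r\neq 0$, then $t^rg$ is conjugate in $G\rtimes_\phi\mathbb{Z}$ to an element of $K$ if and only if there exist $j\in\{0,1,\ldots,|r|-1\}$ and $z\in G$ such that $\phi^r(z)^{-1}\,\phi^j(g)\,z\in K_r$.
   Context: $G\rtimes_\phi\mathbb{Z}$ denotes the group generated by $G$ and a letter $t$ subject to the relations of $G$ and $t^{-1}at=\phi(a)$ for $a\in G$; every element is uniquely of the form $t^ag$ with $a\in\mathbb{Z}$, $g\in G$. The paper phrases the result as an equivalence of decision problems: $GCP_{(K,t^rg)}(G\rtimes_\phi\mathbb{Z})$ (does $t^rg$ have a conjugate in $K$) is equivalent to $GBrCP_{(K_0,\phi,g)}(G)$ when $r=0$, and to the disjunction over $j$ of $GTCP_{(K_r,\phi^r,\phi^j(g))}(G)$ (does $\phi^j(g)$ have a $\phi^r$-twisted conjugate $\phi^r(z)^{-1}\phi^j(g)z$ in $K_r$) when $r\neq0$. *)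

theory Defs
  imports "HOL-Algebra.Group"
begin

definition aut_pow :: "('a, 'b) monoid_scheme \<Rightarrow> ('a \<Rightarrow> 'a) \<Rightarrow> int \<Rightarrow> 'a \<Rightarrow> 'a" where
  "aut_pow G \<phi> k = (if 0 \<le> k then \<phi> ^^ nat k else (inv_into (carrier G) \<phi>) ^^ nat (- k))"

text \<open>The semidirect product G \<rtimes>_phi Z. The element t^a g is represented by the pair (a, g).
  From t^{-1} x t = phi(x) we get (t^a g)(t^b h) = t^(a+b) phi^b(g) h.\<close>
definition sdp :: "('a, 'b) monoid_scheme \<Rightarrow> ('a \<Rightarrow> 'a) \<Rightarrow> (int \<times> 'a) monoid" where
  "sdp G \<phi> = \<lparr> carrier = UNIV \<times> carrier G,
               mult = (\<lambda>(a, x) (b, y). (a + b, aut_pow G \<phi> b x \<otimes>\<^bsub>G\<^esub> y)),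
               one = (0, \<one>\<^bsub>G\<^esub>) \<rparr>"

definition conj_into :: "('c, 'd) monoid_scheme \<Rightarrow> 'c \<Rightarrow> 'c set \<Rightarrow> bool" where
  "conj_into H x K = (\<exists>w \<in> carrier H. inv\<^bsub>H\<^esub> w \<otimes>\<^bsub>H\<^esub> x \<otimes>\<^bsub>H\<^esub> w \<in> K)"

definition slice :: "('a, 'b) monoid_scheme \<Rightarrow> (int \<times> 'a) set \<Rightarrow> int \<Rightarrow> 'a set" where
  "slice G K m = {x \<in> carrier G. (m, x) \<in> K}"

end

theory Submission
  imports Defs
begin

(* Conjugating t^r g by t^a u gives t^r phi^r(u)^-1 phi^a(g) u, so t^r g has a conjugate in K
   iff some phi^a(g) has a phi^r-twisted conjugate in K_r.  Twisted conjugacy by an endomorphism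
   psi is a right action of G, and psi(h) is the psi-twisted conjugate of h by h itself; with
   psi = phi^r this makes the condition depend on a only modulo r, while for r = 0 twisted
   conjugacy is ordinary conjugacy. *)

definition twisted_conj_into :: "('a, 'b) monoid_scheme \<Rightarrow> ('a \<Rightarrow> 'a) \<Rightarrow> 'a \<Rightarrow> 'a set \<Rightarrow> bool" where
  "twisted_conj_into G \<psi> x S \<longleftrightarrow> (\<exists>z \<in> carrier G. inv\<^bsub>G\<^esub> (\<psi> z) \<otimes>\<^bsub>G\<^esub> x \<otimes>\<^bsub>G\<^esub> z \<in> S)"

context group
begin

lemma twisted_conj_into_id: "twisted_conj_into G id x S \<longleftrightarrow> conj_into G x S"
  by (simp add: twisted_conj_into_def conj_into_def)

lemma twisted_conj_twisted_conj:
  assumes "\<psi> \<in> hom G G" and "x \<in> carrier G" "z \<in> carrier G" "w \<in> carrier G"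
  shows "inv (\<psi> w) \<otimes> (inv (\<psi> z) \<otimes> x \<otimes> z) \<otimes> w = inv (\<psi> (z \<otimes> w)) \<otimes> x \<otimes> (z \<otimes> w)"
  using assms by (simp add: hom_mult hom_in_carrier inv_mult_group m_assoc)

lemma twisted_conj_into_twisted_conj:
  assumes "\<psi> \<in> hom G G" and "x \<in> carrier G" "z \<in> carrier G"
  shows "twisted_conj_into G \<psi> (inv (\<psi> z) \<otimes> x \<otimes> z) S \<longleftrightarrow> twisted_conj_into G \<psi> x S"
proof
  assume "twisted_conj_into G \<psi> (inv (\<psi> z) \<otimes> x \<otimes> z) S"
  then obtain w where "w \<in> carrier G" "inv (\<psi> w) \<otimes> (inv (\<psi> z) \<otimes> x \<otimes> z) \<otimes> w \<in> S"
    by (auto simp: twisted_conj_into_def)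
  then show "twisted_conj_into G \<psi> x S"
    using assms by (auto simp: twisted_conj_into_def twisted_conj_twisted_conj)
next
  assume "twisted_conj_into G \<psi> x S"
  then obtain w where w: "w \<in> carrier G" "inv (\<psi> w) \<otimes> x \<otimes> w \<in> S"
    by (auto simp: twisted_conj_into_def)
  have "inv (\<psi> (inv z \<otimes> w)) \<otimes> (inv (\<psi> z) \<otimes> x \<otimes> z) \<otimes> (inv z \<otimes> w) = inv (\<psi> w) \<otimes> x \<otimes> w"
    using assms w by (simp add: twisted_conj_twisted_conj flip: m_assoc)
  then show "twisted_conj_into G \<psi> (inv (\<psi> z) \<otimes> x \<otimes> z) S"
    using assms w unfolding twisted_conj_into_def by (metis inv_closed m_closed)
qed

lemma twisted_conj_into_hom_image:
  assumes "\<psi> \<in> hom G G" and "x \<in> carrier G"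
  shows "twisted_conj_into G \<psi> (\<psi> x) S \<longleftrightarrow> twisted_conj_into G \<psi> x S"
proof -
  have "inv (\<psi> x) \<otimes> \<psi> x \<otimes> x = x"
    using assms by (simp add: hom_in_carrier)
  then show ?thesis
    using twisted_conj_into_twisted_conj[OF assms(1) hom_in_carrier[OF assms] assms(2)] by simp
qed

end

lemma funpow_iso: "\<phi> \<in> iso G G \<Longrightarrow> \<phi> ^^ n \<in> iso G G"
  by (induction n) (simp_all add: id_iso iso_set_trans)

lemma aut_pow_zero [simp]: "aut_pow G \<phi> 0 = id"
  by (simp add: aut_pow_def)

lemma sdp_carrier: "carrier (sdp G \<phi>) = UNIV \<times> carrier G"
  by (simp add: sdp_def)

lemma sdp_mult: "(a, x) \<otimes>\<^bsub>sdp G \<phi>\<^esub> (b, y) = (a + b, aut_pow G \<phi> b x \<otimes>\<^bsub>G\<^esub> y)"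
  by (simp add: sdp_def)

lemma sdp_one: "\<one>\<^bsub>sdp G \<phi>\<^esub> = (0, \<one>\<^bsub>G\<^esub>)"
  by (simp add: sdp_def)

locale group_aut = group G for G (structure) +
  fixes \<phi> :: "'a \<Rightarrow> 'a"
  assumes aut: "\<phi> \<in> iso G G"
begin

lemma aut_pow_iso: "aut_pow G \<phi> k \<in> iso G G"
  using funpow_iso[OF aut] funpow_iso[OF iso_set_sym[OF aut]] by (simp add: aut_pow_def)

lemma aut_pow_hom: "aut_pow G \<phi> k \<in> hom G G"
  by (rule iso_imp_homomorphism[OF aut_pow_iso])

lemma aut_pow_closed [simp]: "x \<in> carrier G \<Longrightarrow> aut_pow G \<phi> k x \<in> carrier G"
  by (rule hom_in_carrier[OF aut_pow_hom])

lemma aut_pow_mult: "x \<in> carrier G \<Longrightarrow> y \<in> carrier G \<Longrightarrow>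
    aut_pow G \<phi> k (x \<otimes> y) = aut_pow G \<phi> k x \<otimes> aut_pow G \<phi> k y"
  by (rule hom_mult[OF aut_pow_hom])

lemma aut_pow_inv: "x \<in> carrier G \<Longrightarrow> aut_pow G \<phi> k (inv x) = inv (aut_pow G \<phi> k x)"
  by (simp add: group_hom.hom_inv group_hom_axioms_def group_hom_def aut_pow_hom)

lemma aut_pow_one: "aut_pow G \<phi> k \<one> = \<one>"
  by (simp add: hom_one aut_pow_hom)

lemma aut_pow_succ:
  assumes "x \<in> carrier G"
  shows "aut_pow G \<phi> (k + 1) x = \<phi> (aut_pow G \<phi> k x)"
proof (cases "0 \<le> k")
  case True
  then have "nat (k + 1) = Suc (nat k)" by simp
  with True show ?thesis by (simp add: aut_pow_def)
next
  case False
  have bij: "bij_betw \<phi> (carrier G) (carrier G)"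
    using aut by (simp add: iso_def)
  from False have "nat (- k) = Suc (nat (- (k + 1)))" by simp
  with False have "aut_pow G \<phi> k x = inv_into (carrier G) \<phi> (aut_pow G \<phi> (k + 1) x)"
    by (simp add: aut_pow_def)
  with assms show ?thesis
    by (simp add: bij_betw_inv_into_right[OF bij])
qed

lemma aut_pow_add:
  assumes "x \<in> carrier G"
  shows "aut_pow G \<phi> (a + b) x = aut_pow G \<phi> a (aut_pow G \<phi> b x)"
proof (induction a rule: int_induct[where k = 0])
  case base
  show ?case by simp
next
  case (step1 i)
  then show ?case
    using aut_pow_succ[of x "i + b"] aut_pow_succ[of "aut_pow G \<phi> b x" i] assms
    by (simp add: ac_simps)
next
  case (step2 i)
  have "\<phi> (aut_pow G \<phi> (i - 1 + b) x) = \<phi> (aut_pow G \<phi> (i - 1) (aut_pow G \<phi> b x))"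
    using step2.IH assms aut_pow_succ[of x "i - 1 + b"] aut_pow_succ[of "aut_pow G \<phi> b x" "i - 1"]
    by (simp add: algebra_simps)
  moreover have "inj_on \<phi> (carrier G)"
    using aut by (simp add: iso_iff)
  ultimately show ?case
    using assms by (simp add: inj_on_eq_iff)
qed


lemma sdp_group: "group (sdp G \<phi>)"
proof (rule groupI)
  fix x assume "x \<in> carrier (sdp G \<phi>)"
  then obtain a u where x: "x = (a, u)" and u: "u \<in> carrier G"
    by (auto simp: sdp_carrier)
  have "aut_pow G \<phi> a (inv (aut_pow G \<phi> (- a) u)) \<otimes> u = \<one>"
    using u by (simp add: aut_pow_inv flip: aut_pow_add)
  then show "\<exists>y \<in> carrier (sdp G \<phi>). y \<otimes>\<^bsub>sdp G \<phi>\<^esub> x = \<one>\<^bsub>sdp G \<phi>\<^esub>"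
    using u by (intro bexI[of _ "(- a, inv (aut_pow G \<phi> (- a) u))"]) (auto simp: x sdp_carrier sdp_mult sdp_one)
qed (auto simp: sdp_carrier sdp_mult sdp_one aut_pow_mult aut_pow_one m_assoc ac_simps simp flip: aut_pow_add)

lemma sdp_inv:
  assumes "u \<in> carrier G"
  shows "inv\<^bsub>sdp G \<phi>\<^esub> (a, u) = (- a, inv (aut_pow G \<phi> (- a) u))"
proof (rule group.inv_equality[OF sdp_group])
  show "(- a, inv (aut_pow G \<phi> (- a) u)) \<otimes>\<^bsub>sdp G \<phi>\<^esub> (a, u) = \<one>\<^bsub>sdp G \<phi>\<^esub>"
    using assms by (simp add: sdp_mult sdp_one aut_pow_inv flip: aut_pow_add)
qed (use assms in \<open>auto simp: sdp_carrier\<close>)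

lemma sdp_conj:
  assumes "u \<in> carrier G" and "g \<in> carrier G"
  shows "inv\<^bsub>sdp G \<phi>\<^esub> (a, u) \<otimes>\<^bsub>sdp G \<phi>\<^esub> (r, g) \<otimes>\<^bsub>sdp G \<phi>\<^esub> (a, u)
    = (r, inv (aut_pow G \<phi> r u) \<otimes> aut_pow G \<phi> a g \<otimes> u)"
proof -
  have "aut_pow G \<phi> a (aut_pow G \<phi> r (aut_pow G \<phi> (- a) u)) = aut_pow G \<phi> r u"
    using assms by (simp flip: aut_pow_add)
  then show ?thesis
    using assms by (simp add: sdp_inv sdp_mult aut_pow_mult aut_pow_inv)
qed

lemma conj_into_sdp_iff:
  assumes "g \<in> carrier G"
  shows "conj_into (sdp G \<phi>) (r, g) K \<longleftrightarrow>
    (\<exists>a. twisted_conj_into G (aut_pow G \<phi> r) (aut_pow G \<phi> a g) (slice G K r))"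
  using assms by (auto simp: conj_into_def twisted_conj_into_def slice_def sdp_carrier sdp_conj)

lemma twisted_conj_into_aut_pow_shift:
  assumes "g \<in> carrier G"
  shows "twisted_conj_into G (aut_pow G \<phi> r) (aut_pow G \<phi> (a + k * r) g) S
    \<longleftrightarrow> twisted_conj_into G (aut_pow G \<phi> r) (aut_pow G \<phi> a g) S"
proof (induction k rule: int_induct[where k = 0])
  case base
  show ?case by simp
next
  case (step1 i)
  have "aut_pow G \<phi> (a + (i + 1) * r) g = aut_pow G \<phi> r (aut_pow G \<phi> (a + i * r) g)"
    using assms by (simp add: algebra_simps flip: aut_pow_add)
  with step1.IH show ?case
    using assms by (simp add: twisted_conj_into_hom_image aut_pow_hom)
next
  case (step2 i)
  have "aut_pow G \<phi> (a + i * r) g = aut_pow G \<phi> r (aut_pow G \<phi> (a + (i - 1) * r) g)"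
    using assms by (simp add: algebra_simps flip: aut_pow_add)
  with step2.IH show ?case
    using assms by (simp add: twisted_conj_into_hom_image aut_pow_hom)
qed

lemma twisted_conj_into_aut_pow_mod:
  assumes "g \<in> carrier G"
  shows "twisted_conj_into G (aut_pow G \<phi> r) (aut_pow G \<phi> (a mod \<bar>r\<bar>) g) S
    \<longleftrightarrow> twisted_conj_into G (aut_pow G \<phi> r) (aut_pow G \<phi> a g) S"
proof -
  have "a mod \<bar>r\<bar> = a + (- (a div \<bar>r\<bar>) * sgn r) * r"
    by (simp add: minus_div_mult_eq_mod[symmetric] abs_sgn algebra_simps)
  then show ?thesis
    by (simp only: twisted_conj_into_aut_pow_shift[OF assms])
qed

end

theorem theorem3p1:
  fixes G (structure) and \<phi> :: "'a \<Rightarrow> 'a" and K :: "(int \<times> 'a) set" and r :: int and g :: 'a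
  assumes "group G"
    and "\<phi> \<in> iso G G"
    and "K \<subseteq> carrier (sdp G \<phi>)"
    and "g \<in> carrier G"
  shows "(r = 0 \<longrightarrow>
            (conj_into (sdp G \<phi>) (0, g) K \<longleftrightarrow>
             (\<exists>k::int. conj_into G (aut_pow G \<phi> k g) (slice G K 0))))
       \<and> (r \<noteq> 0 \<longrightarrow>
            (conj_into (sdp G \<phi>) (r, g) K \<longleftrightarrow>
             (\<exists>j \<in> {0..<\<bar>r\<bar>}. \<exists>z \<in> carrier G.
                inv (aut_pow G \<phi> r z) \<otimes> aut_pow G \<phi> j g \<otimes> z \<in> slice G K r)))"
proof -
  interpret group_aut G \<phi>
    using assms(1,2) by (simp add: group_aut_def group_aut_axioms_def)
  have "conj_into (sdp G \<phi>) (0, g) K \<longleftrightarrow> (\<exists>k. conj_into G (aut_pow G \<phi> k g) (slice G K 0))"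
    using assms(4) by (simp add: conj_into_sdp_iff twisted_conj_into_id)
  moreover have "conj_into (sdp G \<phi>) (r, g) K \<longleftrightarrow>
      (\<exists>j \<in> {0..<\<bar>r\<bar>}. twisted_conj_into G (aut_pow G \<phi> r) (aut_pow G \<phi> j g) (slice G K r))"
    if "r \<noteq> 0"
    unfolding conj_into_sdp_iff[OF assms(4)]
  proof
    assume "\<exists>a. twisted_conj_into G (aut_pow G \<phi> r) (aut_pow G \<phi> a g) (slice G K r)"
    then obtain a where "twisted_conj_into G (aut_pow G \<phi> r) (aut_pow G \<phi> a g) (slice G K r)" ..
    moreover have "a mod \<bar>r\<bar> \<in> {0..<\<bar>r\<bar>}"
      using that by simp
    ultimately show "\<exists>j \<in> {0..<\<bar>r\<bar>}. twisted_conj_into G (aut_pow G \<phi> r) (aut_pow G \<phi> j g) (slice G K r)"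
      using twisted_conj_into_aut_pow_mod[OF assms(4)] by blast
  qed blast
  ultimately show ?thesis
    by (simp add: twisted_conj_into_def)
qed

end
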